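(* Let $\mathcal{R}$ be a fusion ring with basis $\{x_1=1,\ldots,x_m\}$ and $\mathcal{B}=\mathcal{R}\otimes_\mathbb{Z}\mathbb{C}$. If the comultiplication $\Delta:\mathcal{B}\to\mathcal{B}\otimes\mathcal{B}$, $\Delta(x_j)=\frac1{d_j}x_j\otimes x_j$, is a positive map, then the convolution on $\mathcal{B}$ is positive: $x\ast y\geq0$ for all $x,y\in\mathcal{B}$ with $x,y\geq0$.
   Context: A fusion ring is a ring $\mathcal{R}$ which is a free $\mathbb{Z}$-module with a finite basis $\{x_1=1,\ldots,x_m\}$ such that $x_ix_j=\sum_k N_{ij}^k x_k$ with $N_{ij}^k\in\mathbb{N}$; there is an involution $i\mapsto i^*$ whose $\mathbb{Z}$-linear extension is an anti-involution of $\mathcal{R}$; and the coefficient of $x_1$ in $x_ix_j$ equals $\delta_{i,j^*}$. $\mathcal{B}$ is the finite-dimensional $C^*$-algebra with involution $(\sum c_jx_j)^*=\sum\overline{c_j}x_{j^*}$ and faithful trace $\tau(x_j)=\delta_{j,1}$. $d_j$ is the operator norm of $x_j$ in $\mathcal{B}$ (the Frobenius–Perron dimension). The convolution is the bilinear map $\mathcal{B}\times\mathcal{B}\to\mathcal{B}$ with $x_i\ast x_j=\delta_{ij}d_i^{-1}x_i$. *)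

theory Defs
  imports Complex_Main
begin

text \<open>A fusion ring with basis indexed by a finite type 'a: structure constants
  N i j k (coefficient of x_k in x_i x_j), unit index e (x_e = 1) and involution dual.\<close>

definition fusion_ring :: "('a::finite \<Rightarrow> 'a \<Rightarrow> 'a \<Rightarrow> nat) \<Rightarrow> 'a \<Rightarrow> ('a \<Rightarrow> 'a) \<Rightarrow> bool" where
  "fusion_ring N e dual \<longleftrightarrow>
     (\<forall>i j l p. (\<Sum>k\<in>UNIV. N i j k * N k l p) = (\<Sum>k\<in>UNIV. N j l k * N i k p)) \<and>
     (\<forall>j k. N e j k = (if j = k then 1 else 0)) \<and>
     (\<forall>j k. N j e k = (if j = k then 1 else 0)) \<and>
     (\<forall>i. dual (dual i) = i) \<and>
     (\<forall>i j k. N i j k = N (dual j) (dual i) (dual k)) \<and>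
     (\<forall>i j. N i j e = (if i = dual j then 1 else 0))"

text \<open>The complexified algebra: elements are coefficient functions 'b \<Rightarrow> complex.
  These generic operations are used both for B (index 'a) and for B \<otimes> B (index 'a \<times> 'a).\<close>

definition alg_mult :: "('b::finite \<Rightarrow> 'b \<Rightarrow> 'b \<Rightarrow> nat) \<Rightarrow> ('b \<Rightarrow> complex) \<Rightarrow> ('b \<Rightarrow> complex) \<Rightarrow> ('b \<Rightarrow> complex)" where
  "alg_mult N a b = (\<lambda>k. \<Sum>i\<in>UNIV. \<Sum>j\<in>UNIV. a i * b j * of_nat (N i j k))"

definition alg_star :: "('b \<Rightarrow> 'b) \<Rightarrow> ('b \<Rightarrow> complex) \<Rightarrow> ('b \<Rightarrow> complex)" where
  "alg_star dual a = (\<lambda>k. cnj (a (dual k)))"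

definition alg_pos :: "('b::finite \<Rightarrow> 'b \<Rightarrow> 'b \<Rightarrow> nat) \<Rightarrow> ('b \<Rightarrow> 'b) \<Rightarrow> ('b \<Rightarrow> complex) \<Rightarrow> bool" where
  "alg_pos N dual a \<longleftrightarrow> (\<exists>b. a = alg_mult N (alg_star dual b) b)"

definition basis_vec :: "'b \<Rightarrow> ('b \<Rightarrow> complex)" where
  "basis_vec j = (\<lambda>k. if k = j then 1 else 0)"

text \<open>Trace tau(a) = coefficient of x_1, and the GNS (L^2) norm sqrt(tau(a* a)).\<close>
definition tr_norm :: "('a::finite \<Rightarrow> 'a \<Rightarrow> 'a \<Rightarrow> nat) \<Rightarrow> 'a \<Rightarrow> ('a \<Rightarrow> 'a) \<Rightarrow> ('a \<Rightarrow> complex) \<Rightarrow> real" where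
  "tr_norm N e dual a = sqrt (Re (alg_mult N (alg_star dual a) a e))"

text \<open>d_j: operator norm of x_j, i.e. norm of left multiplication by x_j on L^2(B,tau)
  (the faithful GNS representation, which realises the C*-norm of B).\<close>
definition fp_dim :: "('a::finite \<Rightarrow> 'a \<Rightarrow> 'a \<Rightarrow> nat) \<Rightarrow> 'a \<Rightarrow> ('a \<Rightarrow> 'a) \<Rightarrow> 'a \<Rightarrow> real" where
  "fp_dim N e dual j = Sup {tr_norm N e dual (alg_mult N (basis_vec j) a) | a. tr_norm N e dual a \<le> 1}"

definition convolution :: "('a::finite \<Rightarrow> 'a \<Rightarrow> 'a \<Rightarrow> nat) \<Rightarrow> 'a \<Rightarrow> ('a \<Rightarrow> 'a) \<Rightarrow> ('a \<Rightarrow> complex) \<Rightarrow> ('a \<Rightarrow> complex) \<Rightarrow> ('a \<Rightarrow> complex)" where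
  "convolution N e dual a b = (\<lambda>k. a k * b k / of_real (fp_dim N e dual k))"

definition tensor_N :: "('a \<Rightarrow> 'a \<Rightarrow> 'a \<Rightarrow> nat) \<Rightarrow> ('a \<times> 'a) \<Rightarrow> ('a \<times> 'a) \<Rightarrow> ('a \<times> 'a) \<Rightarrow> nat" where
  "tensor_N N = (\<lambda>(i, j) (k, l) (p, q). N i k p * N j l q)"

definition tensor_dual :: "('a \<Rightarrow> 'a) \<Rightarrow> ('a \<times> 'a) \<Rightarrow> ('a \<times> 'a)" where
  "tensor_dual dual = (\<lambda>(i, j). (dual i, dual j))"

definition comult :: "('a::finite \<Rightarrow> 'a \<Rightarrow> 'a \<Rightarrow> nat) \<Rightarrow> 'a \<Rightarrow> ('a \<Rightarrow> 'a) \<Rightarrow> ('a \<Rightarrow> complex) \<Rightarrow> ('a \<times> 'a \<Rightarrow> complex)" where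
  "comult N e dual a = (\<lambda>(i, j). if i = j then a i / of_real (fp_dim N e dual i) else 0)"

end

theory Submission
  imports Defs "HOL-Analysis.Analysis" "HOL-Library.Function_Algebras"
    "HOL-Computational_Algebra.Fundamental_Theorem_Algebra"
begin

text \<open>
  Write \<open>\<Delta>(x) = D\<^sup>* D\<close> in \<open>B \<otimes> B\<close> and \<open>y = c\<^sup>* c\<close>, and let \<open>c'\<close> be the
  coefficientwise conjugate of \<open>c\<close>, so that \<open>(c'\<^sup>* c')(j\<^sup>*) = y(j)\<close>. As \<open>\<Delta>(x)\<close> is
  diagonal, the coefficient of \<open>x\<^sub>1 \<otimes> x\<^sub>j\<close> in \<open>(c'\<^sup>* c' \<otimes> 1) \<Delta>(x)\<close> is
  \<open>x(j) y(j) / d\<^sub>j\<close>: the factor \<open>1 / d\<^sub>j\<close> of \<open>\<Delta>\<close> is that of the convolution, so nothing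
  about the dimensions \<open>d\<^sub>j\<close> is needed. Taking this coefficient is the slice map
  \<open>\<tau> \<otimes> id\<close>, which is tracial against \<open>B \<otimes> 1\<close>; moving \<open>U\<^sup>* = c'\<^sup>* \<otimes> 1\<close> to the
  right turns the product into \<open>E\<^sup>* E\<close> with \<open>E = D U\<^sup>*\<close>, whose slice is the sum
  \<open>\<Sum>\<^sub>i E\<^sub>i\<^sup>* E\<^sub>i\<close> over the rows \<open>E\<^sub>i = E(i, -)\<close>.

  It remains to see that a sum of squares \<open>p\<close> is a square. It is self-adjoint with
  \<open>\<tau>(u\<^sup>* p u) \<ge> 0\<close>, so its eigenvalues are nonnegative reals and, each \<open>p - z\<close> being
  self-adjoint, \<open>p\<close> is annihilated by a product of distinct factors \<open>X - z\<close>, \<open>z \<ge> 0\<close>.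
  A polynomial \<open>f\<close> interpolating \<open>\<surd>z\<close> at these roots gives \<open>p = f(p)\<^sup>* f(p)\<close>.
\<close>

lemma sum_fun_apply: "sum f A x = (\<Sum>a\<in>A. f a x)"
  by (induct A rule: infinite_finite_induct) auto

lemma poly_interpolation_exists:
  fixes h :: "'a::field \<Rightarrow> 'a"
  assumes "finite S"
  shows "\<exists>f. \<forall>x\<in>S. poly f x = h x"
  using assms
proof (induct S rule: finite_induct)
  case empty
  then show ?case by simp
next
  case (insert s S)
  then obtain f where f: "\<forall>x\<in>S. poly f x = h x" by blast
  define P where "P = (\<Prod>x\<in>S. [:- x, 1:])"
  have "poly P s \<noteq> 0" "\<forall>x\<in>S. poly P x = 0"
    using insert(1,2) by (auto simp: P_def poly_prod prod_zero_iff)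
  then have "\<forall>x\<in>insert s S. poly (f + smult ((h s - poly f s) / poly P s) P) x = h x"
    using f by auto
  then show ?case by blast
qed

lemma prod_linear_factors_dvd:
  fixes h :: "'a::idom poly"
  assumes "finite S" "\<forall>x\<in>S. poly h x = 0"
  shows "(\<Prod>x\<in>S. [:- x, 1:]) dvd h"
  using assms
proof (induct S arbitrary: h rule: finite_induct)
  case empty
  then show ?case by simp
next
  case (insert s S)
  obtain q where h: "h = [:- s, 1:] * q"
    using insert(4) by (auto simp: poly_eq_0_iff_dvd elim: dvdE)
  have "\<forall>x\<in>S. poly q x = 0"
    using insert(2,4) by (auto simp: h)
  then show ?case
    unfolding h prod.insert[OF insert(1,2)] by (rule mult_dvd_mono[OF dvd_refl insert(3)])
qed

lemma exists_vanishing_combination: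
  fixes v :: "nat \<Rightarrow> 'b::finite \<Rightarrow> complex"
  shows "\<exists>n c. (\<exists>i\<le>n. c i \<noteq> 0) \<and> (\<forall>k. (\<Sum>i\<le>n. c i * v i k) = 0)"
proof -
  define M where "M = DIM(complex ^ 'b)"
  show ?thesis
  proof (cases "inj_on v {..M}")
    case False
    then obtain i j where ij: "i \<le> M" "j \<le> M" "i \<noteq> j" "v i = v j"
      unfolding inj_on_def by auto
    define c :: "nat \<Rightarrow> complex" where "c = (\<lambda>l. of_bool (l = i) - of_bool (l = j))"
    have "(\<Sum>l\<le>M. c l * v l k) = 0" for k
      using ij by (simp add: c_def left_diff_distrib sum_subtractf)
    moreover have "c i \<noteq> 0" using ij(3) by (simp add: c_def)
    ultimately show ?thesis using ij(1) by blast
  next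
    case True
    define S where "S = (\<lambda>i. vec_lambda (v i)) ` {..M}"
    have inj: "inj_on (\<lambda>i. vec_lambda (v i)) {..M}"
      using True by (simp add: inj_on_def vec_lambda_inject)
    have "card S = Suc M"
      using card_image[OF inj] by (simp add: S_def)
    then have "dependent S"
      using independent_bound[of S] by (auto simp: M_def)
    then obtain u where u: "\<exists>w\<in>S. u w \<noteq> 0" "(\<Sum>w\<in>S. u w *\<^sub>R w) = 0"
      using dependent_finite[of S] by (auto simp: S_def)
    define c where "c = (\<lambda>i. complex_of_real (u (vec_lambda (v i))))"
    have "(\<Sum>i\<le>M. u (vec_lambda (v i)) *\<^sub>R vec_lambda (v i)) = 0"
      using u(2) unfolding S_def sum.reindex[OF inj] by (simp add: comp_def)
    then have "(\<Sum>i\<le>M. c i * v i k) = 0" for k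
      by (simp add: vec_eq_iff sum_component c_def flip: scaleR_conv_of_real)
    moreover have "\<exists>i\<le>M. c i \<noteq> 0"
      using u(1) by (auto simp: S_def c_def)
    ultimately show ?thesis by blast
  qed
qed

lemma sum_move_outer_innermost:
  "(\<Sum>k\<in>A. \<Sum>i\<in>B. \<Sum>j\<in>C. f k i j) = (\<Sum>i\<in>B. \<Sum>j\<in>C. \<Sum>k\<in>A. f k i j)"
  by (subst sum.swap) (rule sum.cong[OF refl], rule sum.swap)

lemma sum_reorder4:
  "(\<Sum>k\<in>A. \<Sum>l\<in>B. \<Sum>i\<in>C. \<Sum>j\<in>D. f i j k l) = (\<Sum>i\<in>C. \<Sum>j\<in>D. \<Sum>l\<in>B. \<Sum>k\<in>A. f i j k l)"
proof -
  have "(\<Sum>k\<in>A. \<Sum>l\<in>B. \<Sum>i\<in>C. \<Sum>j\<in>D. f i j k l) = (\<Sum>k\<in>A. \<Sum>i\<in>C. \<Sum>j\<in>D. \<Sum>l\<in>B. f i j k l)"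
    by (rule sum.cong[OF refl], rule sum_move_outer_innermost)
  also have "\<dots> = (\<Sum>i\<in>C. \<Sum>k\<in>A. \<Sum>j\<in>D. \<Sum>l\<in>B. f i j k l)"
    by (rule sum.swap)
  also have "\<dots> = (\<Sum>i\<in>C. \<Sum>j\<in>D. \<Sum>l\<in>B. \<Sum>k\<in>A. f i j k l)"
    by (rule sum.cong[OF refl], rule sum_move_outer_innermost)
  finally show ?thesis .
qed

locale fusion_algebra =
  fixes N :: "'b::finite \<Rightarrow> 'b \<Rightarrow> 'b \<Rightarrow> nat" and e :: 'b and dual :: "'b \<Rightarrow> 'b"
  assumes fusion_ring: "fusion_ring N e dual"
begin

lemma N_assoc: "(\<Sum>k\<in>UNIV. N i j k * N k l p) = (\<Sum>k\<in>UNIV. N j l k * N i k p)"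
  and N_unit_left: "N e j k = of_bool (j = k)"
  and N_unit_right: "N j e k = of_bool (j = k)"
  and dual_dual [simp]: "dual (dual i) = i"
  and N_dual: "N i j k = N (dual j) (dual i) (dual k)"
  and N_at_unit: "N i j e = of_bool (i = dual j)"
  using fusion_ring unfolding fusion_ring_def by auto

lemma dual_unit [simp]: "dual e = e"
  using N_at_unit[of e e] N_unit_left[of e e] by (cases "e = dual e") auto

lemma dual_eq_unit_iff [simp]: "dual i = e \<longleftrightarrow> i = e"
  by (metis dual_dual dual_unit)

lemma sum_reindex_dual: "(\<Sum>i\<in>UNIV. f (dual i)) = (\<Sum>i\<in>UNIV. f i)"
  by (rule sum.reindex_bij_witness[of _ dual dual]) auto

abbreviation mul where "mul \<equiv> alg_mult N"
abbreviation adj where "adj \<equiv> alg_star dual"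
abbreviation one where "one \<equiv> basis_vec e"

lemma mul_assoc: "mul (mul a b) c = mul a (mul b c)"
proof
  fix p
  have "mul (mul a b) c p =
      (\<Sum>k\<in>UNIV. \<Sum>l\<in>UNIV. \<Sum>i\<in>UNIV. \<Sum>j\<in>UNIV. a i * b j * c l * (of_nat (N i j k) * of_nat (N k l p)))"
    unfolding alg_mult_def by (simp add: sum_distrib_right sum_distrib_left mult_ac)
  also have "\<dots> = (\<Sum>i\<in>UNIV. \<Sum>j\<in>UNIV. \<Sum>l\<in>UNIV. \<Sum>k\<in>UNIV. a i * b j * c l * (of_nat (N i j k) * of_nat (N k l p)))"
    by (rule sum_reorder4)
  also have "\<dots> = (\<Sum>i\<in>UNIV. \<Sum>j\<in>UNIV. \<Sum>l\<in>UNIV. a i * b j * c l * of_nat (\<Sum>k\<in>UNIV. N i j k * N k l p))"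
    by (simp add: sum_distrib_left)
  also have "\<dots> = (\<Sum>i\<in>UNIV. \<Sum>j\<in>UNIV. \<Sum>l\<in>UNIV. a i * b j * c l * of_nat (\<Sum>k\<in>UNIV. N j l k * N i k p))"
    by (simp only: N_assoc)
  also have "\<dots> = (\<Sum>i\<in>UNIV. \<Sum>j\<in>UNIV. \<Sum>l\<in>UNIV. \<Sum>k\<in>UNIV. a i * b j * c l * (of_nat (N j l k) * of_nat (N i k p)))"
    by (simp add: sum_distrib_left)
  also have "\<dots> = (\<Sum>i\<in>UNIV. \<Sum>k\<in>UNIV. \<Sum>j\<in>UNIV. \<Sum>l\<in>UNIV. a i * b j * c l * (of_nat (N j l k) * of_nat (N i k p)))"
    by (rule sum.cong[OF refl], rule sum_move_outer_innermost[symmetric])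
  also have "\<dots> = mul a (mul b c) p"
    unfolding alg_mult_def by (simp add: sum_distrib_right sum_distrib_left mult_ac)
  finally show "mul (mul a b) c p = mul a (mul b c) p" .
qed

lemma mul_add_left: "mul (a + b) c = mul a c + mul b c"
  unfolding alg_mult_def by (rule ext) (simp add: distrib_right sum.distrib)

lemma mul_add_right: "mul a (b + c) = mul a b + mul a c"
  unfolding alg_mult_def by (rule ext) (simp add: distrib_left distrib_right sum.distrib)

lemma mul_scale_left: "mul (\<lambda>k. z * a k) b = (\<lambda>k. z * mul a b k)"
  unfolding alg_mult_def by (rule ext) (simp add: sum_distrib_left mult_ac)

lemma mul_scale_right: "mul a (\<lambda>k. z * b k) = (\<lambda>k. z * mul a b k)"
  unfolding alg_mult_def by (rule ext) (simp add: sum_distrib_left mult_ac)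

lemma mul_zero_left [simp]: "mul 0 a = 0"
  and mul_zero_right [simp]: "mul a 0 = 0"
  unfolding alg_mult_def by (simp_all add: fun_eq_iff)

lemma mul_sum_left: "mul (\<Sum>i\<in>S. f i) b = (\<Sum>i\<in>S. mul (f i) b)"
  using sum_comp_morphism[of "\<lambda>a. mul a b" f S] by (simp add: mul_add_left comp_def)

lemma mul_sum_right: "mul b (\<Sum>i\<in>S. f i) = (\<Sum>i\<in>S. mul b (f i))"
  using sum_comp_morphism[of "mul b" f S] by (simp add: mul_add_right comp_def)

lemma mul_basis_left: "mul (basis_vec i) a k = (\<Sum>j\<in>UNIV. a j * of_nat (N i j k))"
  unfolding alg_mult_def basis_vec_def by (subst sum.swap) (simp add: if_distrib if_distribR cong: if_cong)

lemma mul_basis_right: "mul a (basis_vec j) k = (\<Sum>i\<in>UNIV. a i * of_nat (N i j k))"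
  unfolding alg_mult_def basis_vec_def by (simp add: if_distrib if_distribR cong: if_cong)

lemma mul_one_left [simp]: "mul one a = a"
  by (simp add: fun_eq_iff mul_basis_left N_unit_left)

lemma mul_one_right [simp]: "mul a one = a"
  by (simp add: fun_eq_iff mul_basis_right N_unit_right)

lemma adj_adj [simp]: "adj (adj a) = a"
  by (simp add: alg_star_def)

lemma adj_zero [simp]: "adj 0 = 0"
  and adj_one [simp]: "adj one = one"
  and adj_add: "adj (a + b) = adj a + adj b"
  and adj_scale: "adj (\<lambda>k. z * a k) = (\<lambda>k. cnj z * adj a k)"
  by (auto simp: alg_star_def basis_vec_def)

lemma adj_sum: "adj (\<Sum>i\<in>S. f i) = (\<Sum>i\<in>S. adj (f i))"
  using sum_comp_morphism[of adj f S] by (simp add: adj_add comp_def)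

lemma adj_mul: "adj (mul a b) = mul (adj b) (adj a)"
proof
  fix k
  have "adj (mul a b) k = (\<Sum>i\<in>UNIV. \<Sum>j\<in>UNIV. cnj (a i) * cnj (b j) * of_nat (N i j (dual k)))"
    by (simp add: alg_star_def alg_mult_def)
  also have "\<dots> = (\<Sum>j\<in>UNIV. \<Sum>i\<in>UNIV. cnj (a (dual i)) * cnj (b (dual j)) * of_nat (N (dual i) (dual j) (dual k)))"
    by (subst sum.swap, subst (1 2) sum_reindex_dual[symmetric]) simp
  also have "\<dots> = mul (adj b) (adj a) k"
    by (simp add: alg_star_def alg_mult_def N_dual[of "dual _" "dual _" "dual k"] mult_ac)
  finally show "adj (mul a b) k = mul (adj b) (adj a) k" .
qed

lemma trace_adj_mul_self: "mul (adj u) u e = (\<Sum>k\<in>UNIV. of_real ((cmod (u k))\<^sup>2))"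
proof -
  have "mul (adj u) u e = (\<Sum>k\<in>UNIV. u k * cnj (u k))"
    unfolding alg_mult_def alg_star_def by (subst sum.swap) (simp add: N_at_unit mult.commute)
  then show ?thesis
    by (simp only: complex_norm_square)
qed

lemma trace_adj_mul_self_nonneg: "0 \<le> mul (adj u) u e"
  by (simp add: trace_adj_mul_self sum_nonneg less_eq_complex_def)

lemma trace_adj_mul_self_eq_0_iff: "mul (adj u) u e = 0 \<longleftrightarrow> u = 0"
proof -
  have "mul (adj u) u e = 0 \<longleftrightarrow> (\<Sum>k\<in>UNIV. (cmod (u k))\<^sup>2) = 0"
    unfolding trace_adj_mul_self of_real_sum[symmetric] of_real_eq_0_iff ..
  also have "\<dots> \<longleftrightarrow> u = 0"
    by (simp add: sum_nonneg_eq_0_iff fun_eq_iff)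
  finally show ?thesis .
qed

lemma self_adjoint_mul_mul_eq_0:
  assumes "adj a = a" "mul a (mul a v) = 0"
  shows "mul a v = 0"
proof -
  have "mul (adj (mul a v)) (mul a v) = mul (adj v) (mul a (mul a v))"
    by (simp add: adj_mul assms(1) mul_assoc)
  then have "mul (adj (mul a v)) (mul a v) e = 0"
    using assms(2) by simp
  then show ?thesis
    by (simp only: trace_adj_mul_self_eq_0_iff)
qed

section \<open>Polynomial functional calculus\<close>

primrec mul_power :: "('b \<Rightarrow> complex) \<Rightarrow> nat \<Rightarrow> 'b \<Rightarrow> complex" where
  "mul_power a 0 = one"
| "mul_power a (Suc n) = mul a (mul_power a n)"

definition poly_eval :: "complex poly \<Rightarrow> ('b \<Rightarrow> complex) \<Rightarrow> 'b \<Rightarrow> complex" where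
  "poly_eval f a = (\<lambda>k. \<Sum>i\<le>degree f. coeff f i * mul_power a i k)"

lemma poly_eval_eq_sum_lessThan:
  assumes "degree f < n"
  shows "poly_eval f a k = (\<Sum>i<n. coeff f i * mul_power a i k)"
  unfolding poly_eval_def
  by (rule sum.mono_neutral_left) (use assms in \<open>auto simp: coeff_eq_0\<close>)

lemma poly_eval_0 [simp]: "poly_eval 0 a = 0"
  by (simp add: poly_eval_def fun_eq_iff)

lemma poly_eval_pCons: "poly_eval (pCons c f) a = (\<lambda>k. c * one k) + mul a (poly_eval f a)"
proof
  fix k
  define n where "n = Suc (degree f)"
  have f_eq: "poly_eval f a = (\<Sum>i<n. (\<lambda>k. coeff f i * mul_power a i k))"
    by (rule ext) (simp only: sum_fun_apply poly_eval_eq_sum_lessThan[of f n] n_def lessI)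
  have "poly_eval (pCons c f) a k = (\<Sum>i<Suc n. coeff (pCons c f) i * mul_power a i k)"
    by (rule poly_eval_eq_sum_lessThan) (use degree_pCons_le[of c f] in \<open>simp add: n_def\<close>)
  also have "\<dots> = c * one k + (\<Sum>i<n. coeff f i * mul a (mul_power a i) k)"
    unfolding sum.lessThan_Suc_shift by simp
  also have "(\<Sum>i<n. coeff f i * mul a (mul_power a i) k) = mul a (poly_eval f a) k"
    by (simp add: f_eq mul_sum_right mul_scale_right sum_fun_apply)
  finally show "poly_eval (pCons c f) a k = ((\<lambda>k. c * one k) + mul a (poly_eval f a)) k"
    by simp
qed

lemma poly_eval_const: "poly_eval [:c:] a = (\<lambda>k. c * one k)"
  using poly_eval_pCons[of c 0 a] by simp

lemma poly_eval_linear: "poly_eval [:c, 1:] a = (\<lambda>k. c * one k) + a"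
  using poly_eval_pCons[of c "[:1:]" a] by (simp add: poly_eval_const)

lemma poly_eval_X: "poly_eval [:0, 1:] a = a"
  by (simp add: poly_eval_linear zero_fun_def)

lemma poly_eval_add: "poly_eval (f + g) a = poly_eval f a + poly_eval g a"
proof
  fix k
  define n where "n = Suc (max (degree f) (degree g))"
  have "degree (f + g) < n" "degree f < n" "degree g < n"
    using degree_add_le_max[of f g] by (auto simp: n_def)
  then show "poly_eval (f + g) a k = (poly_eval f a + poly_eval g a) k"
    by (simp add: poly_eval_eq_sum_lessThan[of _ n] distrib_right sum.distrib)
qed

lemma poly_eval_smult: "poly_eval (smult c f) a = (\<lambda>k. c * poly_eval f a k)"
  by (rule ext) (simp add: poly_eval_eq_sum_lessThan[of _ "Suc (degree f)"] sum_distrib_left distrib_left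
      mult.assoc le_less_trans[OF degree_smult_le])

lemma poly_eval_diff: "poly_eval (f - g) a = poly_eval f a - poly_eval g a"
  using poly_eval_add[of f "- g" a] poly_eval_smult[of "- 1" g a] by (simp add: fun_eq_iff)

lemma poly_eval_mult: "poly_eval (f * g) a = mul (poly_eval f a) (poly_eval g a)"
proof (induct f rule: pCons_induct)
  case 0
  then show ?case by (simp only: mult_zero_left poly_eval_0 mul_zero_left)
next
  case (pCons c f)
  have "poly_eval (pCons c f * g) a = (\<lambda>k. c * poly_eval g a k) + mul a (mul (poly_eval f a) (poly_eval g a))"
    by (simp add: poly_eval_add poly_eval_smult poly_eval_pCons pCons.hyps(2) zero_fun_def)
  also have "\<dots> = mul (poly_eval (pCons c f) a) (poly_eval g a)"
    by (simp add: poly_eval_pCons mul_add_left mul_scale_left mul_assoc)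
  finally show ?case .
qed

lemma poly_eval_commute: "mul (poly_eval f a) (poly_eval g a) = mul (poly_eval g a) (poly_eval f a)"
  by (metis poly_eval_mult mult.commute)

lemma adj_poly_eval:
  assumes "adj a = a"
  shows "adj (poly_eval f a) = poly_eval (map_poly cnj f) a"
proof (induct f rule: pCons_induct)
  case 0
  then show ?case by (simp only: map_poly_0 poly_eval_0 adj_zero)
next
  case (pCons c f)
  have "adj (poly_eval (pCons c f) a) = (\<lambda>k. cnj c * one k) + mul (poly_eval (map_poly cnj f) a) a"
    by (simp add: poly_eval_pCons adj_add adj_mul adj_scale pCons.hyps(2) assms)
  also have "mul (poly_eval (map_poly cnj f) a) a = mul a (poly_eval (map_poly cnj f) a)"
    using poly_eval_commute[of "map_poly cnj f" a "[:0, 1:]"] by (simp only: poly_eval_X)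
  finally show ?case
    by (simp add: map_poly_pCons poly_eval_pCons)
qed

lemma exists_annihilating_poly: "\<exists>g. g \<noteq> 0 \<and> poly_eval g a = 0"
proof -
  obtain n c where c: "\<exists>i\<le>n. c i \<noteq> 0" "\<forall>k. (\<Sum>i\<le>n. c i * mul_power a i k) = 0"
    using exists_vanishing_combination[of "mul_power a"] by blast
  define g where "g = (\<Sum>i\<le>n. monom (c i) i)"
  have coeff_g: "coeff g i = (if i \<le> n then c i else 0)" for i
    by (simp add: g_def coeff_sum coeff_monom)
  have "g \<noteq> 0"
    using c(1) coeff_g by (metis coeff_0)
  moreover have "degree g < Suc n"
    using coeff_g by (intro le_imp_less_Suc degree_le) auto
  then have "poly_eval g a = 0"
    using c(2) by (simp add: fun_eq_iff poly_eval_eq_sum_lessThan coeff_g lessThan_Suc_atMost)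
  ultimately show ?thesis by blast
qed

lemma mul_poly_eval_linear: "mul (poly_eval [:-z, 1:] a) u = mul a u - (\<lambda>k. z * u k)"
  unfolding poly_eval_linear mul_add_left mul_scale_left mul_one_left by (simp add: fun_eq_iff)

lemma poly_eval_mult_apply:
  "mul (poly_eval (f * g) a) w = mul (poly_eval f a) (mul (poly_eval g a) w)"
  by (simp add: poly_eval_mult mul_assoc)

end

section \<open>Square roots of positive elements\<close>

text \<open>The order on \<^typ>\<open>complex\<close> is the partial order of HOL-Library's Complex_Order:
  \<open>0 \<le> z\<close> means that \<open>z\<close> is a nonnegative real.\<close>

lemma complex_nonneg_mult_pos_cancel:
  fixes z t :: complex
  assumes "0 < t" "0 \<le> z * t"
  shows "0 \<le> z"
  using assms by (auto simp: less_eq_complex_def less_complex_def zero_le_mult_iff)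

locale positive_element = fusion_algebra N e dual
  for N :: "'b::finite \<Rightarrow> 'b \<Rightarrow> 'b \<Rightarrow> nat" and e dual +
  fixes p :: "'b \<Rightarrow> complex"
  assumes self_adjoint: "adj p = p"
    and trace_nonneg: "0 \<le> mul (adj u) (mul p u) e"
begin

lemma eigenvalue_nonneg:
  assumes "mul p u = (\<lambda>k. z * u k)" "u \<noteq> 0"
  shows "0 \<le> z"
proof (rule complex_nonneg_mult_pos_cancel)
  show "0 < mul (adj u) u e"
    using trace_adj_mul_self_nonneg[of u] trace_adj_mul_self_eq_0_iff[of u] assms(2) by simp
  show "0 \<le> z * mul (adj u) u e"
    using trace_nonneg[of u] by (simp add: assms(1) mul_scale_right)
qed

lemma self_adjoint_linear_factor:
  assumes "0 \<le> z"
  shows "adj (poly_eval [:-z, 1:] p) = poly_eval [:-z, 1:] p"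
proof -
  have "cnj z = z"
    using assms by (simp add: less_eq_complex_def complex_eq_iff)
  then show ?thesis
    by (simp add: adj_poly_eval self_adjoint map_poly_pCons)
qed

lemma annihilator_insert_root:
  assumes "0 \<le> z" "finite R"
    and "mul (poly_eval (\<Prod>x\<in>R. [:-x, 1:]) p) (mul (poly_eval [:-z, 1:] p) w) = 0"
  shows "mul (poly_eval (\<Prod>x\<in>insert z R. [:-x, 1:]) p) w = 0"
proof (cases "z \<in> R")
  case True
  define Q where "Q = (\<Prod>x\<in>R - {z}. [:-x, 1:])"
  have R_eq: "(\<Prod>x\<in>R. [:-x, 1:]) = [:-z, 1:] * Q"
    unfolding Q_def using assms(2) True by (rule prod.remove)
  have "mul (poly_eval [:-z, 1:] p) (mul (poly_eval [:-z, 1:] p) (mul (poly_eval Q p) w)) = 0"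
    using assms(3) unfolding R_eq by (metis poly_eval_mult_apply mult.commute)
  then have "mul (poly_eval [:-z, 1:] p) (mul (poly_eval Q p) w) = 0"
    by (rule self_adjoint_mul_mul_eq_0[OF self_adjoint_linear_factor[OF assms(1)]])
  then show ?thesis
    by (simp only: insert_absorb[OF True] R_eq poly_eval_mult_apply)
next
  case False
  then show ?thesis
    using assms(3) by (simp only: prod.insert[OF assms(2) False] mult.commute[of "[:-z, 1:]"]
        poly_eval_mult_apply)
qed

lemma exists_nonneg_roots_annihilator:
  assumes "g \<noteq> 0" "mul (poly_eval g p) w = 0"
  shows "\<exists>R. finite R \<and> (\<forall>z\<in>R. 0 \<le> z) \<and> mul (poly_eval (\<Prod>z\<in>R. [:-z, 1:]) p) w = 0"
  using assms
proof (induct "degree g" arbitrary: g w rule: less_induct)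
  case less
  show ?case
  proof (cases "degree g = 0")
    case True
    then obtain c where "g = [:c:]" "c \<noteq> 0"
      using less.prems(1) by (metis degree_eq_zeroE pCons_0_0)
    then have "w = 0"
      using less.prems(2) by (simp add: poly_eval_const mul_scale_left fun_eq_iff)
    then show ?thesis by (intro exI[of _ "{}"]) simp
  next
    case False
    then obtain z where "poly g z = 0"
      using fundamental_theorem_of_algebra[of g] by (auto simp: constant_degree)
    then obtain h where g: "g = [:-z, 1:] * h"
      by (auto simp: poly_eq_0_iff_dvd elim: dvdE)
    with less.prems(1) have "h \<noteq> 0"
      by auto
    then have "degree h < degree g"
      unfolding g by (subst degree_mult_eq) auto
    show ?thesis
    proof (cases "mul (poly_eval h p) w = 0")
      case True
      then show ?thesis
        using less.hyps \<open>h \<noteq> 0\<close> \<open>degree h < degree g\<close> by blast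
    next
      case False
      have "mul (poly_eval [:-z, 1:] p) (mul (poly_eval h p) w) = 0"
        using less.prems(2) unfolding g poly_eval_mult_apply .
      then have "mul p (mul (poly_eval h p) w) = (\<lambda>k. z * mul (poly_eval h p) w k)"
        by (simp add: mul_poly_eval_linear)
      then have "0 \<le> z"
        using False by (rule eigenvalue_nonneg)
      have "mul (poly_eval h p) (mul (poly_eval [:-z, 1:] p) w) = 0"
        using less.prems(2) unfolding g mult.commute[of "[:-z, 1:]"] poly_eval_mult_apply .
      then obtain R where "finite R" "\<forall>x\<in>R. 0 \<le> x"
          "mul (poly_eval (\<Prod>x\<in>R. [:-x, 1:]) p) (mul (poly_eval [:-z, 1:] p) w) = 0"
        using less.hyps \<open>h \<noteq> 0\<close> \<open>degree h < degree g\<close> by blast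
      then show ?thesis
        using annihilator_insert_root \<open>0 \<le> z\<close> by (intro exI[of _ "insert z R"]) auto
    qed
  qed
qed

lemma exists_square_root: "\<exists>b. p = mul (adj b) b"
proof -
  obtain g where "g \<noteq> 0" "poly_eval g p = 0"
    using exists_annihilating_poly by blast
  then obtain R where R: "finite R" "\<forall>z\<in>R. 0 \<le> z" "mul (poly_eval (\<Prod>z\<in>R. [:-z, 1:]) p) one = 0"
    using exists_nonneg_roots_annihilator[of g one] by auto
  obtain f where f: "\<forall>z\<in>R. poly f z = of_real (sqrt (Re z))"
    using poly_interpolation_exists[OF R(1), of "\<lambda>z. of_real (sqrt (Re z))"] by blast
  define h where "h = map_poly cnj f * f - [:0, 1:]"
  have "\<forall>z\<in>R. poly h z = 0"
  proof
    fix z assume "z \<in> R"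
    then have "z = of_real (Re z)" "0 \<le> Re z"
      using R(2) by (auto simp: less_eq_complex_def complex_eq_iff)
    then obtain r where r: "z = of_real r" "0 \<le> r"
      by blast
    have "poly h z = of_real (sqrt r) * of_real (sqrt r) - of_real r"
      using f \<open>z \<in> R\<close> unfolding r(1) by (simp add: h_def poly_map_poly_cnj)
    also have "\<dots> = 0"
      using r(2) by (simp flip: of_real_mult)
    finally show "poly h z = 0" .
  qed
  then obtain q where "h = (\<Prod>z\<in>R. [:-z, 1:]) * q"
    using prod_linear_factors_dvd[OF R(1)] by (blast elim: dvdE)
  then have "poly_eval h p = 0"
    using R(3) by (simp add: poly_eval_mult)
  then have "poly_eval (map_poly cnj f * f) p = p"
    by (simp add: h_def poly_eval_diff poly_eval_X)
  then have "mul (adj (poly_eval f p)) (poly_eval f p) = p"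
    by (simp add: adj_poly_eval[OF self_adjoint] flip: poly_eval_mult)
  then show ?thesis by metis
qed

end

context fusion_algebra
begin

lemma alg_pos_sum_adj_mul_self:
  assumes "finite I"
  shows "alg_pos N dual (\<Sum>i\<in>I. mul (adj (f i)) (f i))"
proof -
  define p where "p = (\<Sum>i\<in>I. mul (adj (f i)) (f i))"
  have "mul (adj u) (mul p u) = (\<Sum>i\<in>I. mul (adj (mul (f i) u)) (mul (f i) u))" for u
    by (simp add: p_def mul_sum_left mul_sum_right adj_mul mul_assoc)
  then have "0 \<le> mul (adj u) (mul p u) e" for u
    by (simp add: sum_fun_apply sum_nonneg trace_adj_mul_self_nonneg)
  moreover have "adj p = p"
    by (simp add: p_def adj_sum adj_mul)
  ultimately interpret positive_element N e dual p
    by unfold_locales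
  show ?thesis
    unfolding alg_pos_def p_def[symmetric] using exists_square_root by blast
qed

end

section \<open>The tensor square\<close>

lemma sum_UNIV_pair: "(\<Sum>q\<in>UNIV. f q) = (\<Sum>a\<in>UNIV. \<Sum>b\<in>UNIV. f (a, b))"
  using sum.cartesian_product'[of f UNIV UNIV] by simp

lemma tensor_N_apply [simp]: "tensor_N N (i1, i2) (j1, j2) (k1, k2) = N i1 j1 k1 * N i2 j2 k2"
  by (simp add: tensor_N_def)

lemma tensor_dual_apply [simp]: "tensor_dual dual (i, j) = (dual i, dual j)"
  by (simp add: tensor_dual_def)

context fusion_algebra
begin

lemma tensor_N_assoc:
  "(\<Sum>k\<in>UNIV. tensor_N N i j k * tensor_N N k l p) = (\<Sum>k\<in>UNIV. tensor_N N j l k * tensor_N N i k p)"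
proof -
  obtain i1 i2 j1 j2 l1 l2 p1 p2 where "i = (i1, i2)" "j = (j1, j2)" "l = (l1, l2)" "p = (p1, p2)"
    by (cases i, cases j, cases l, cases p) auto
  moreover have "(\<Sum>k1\<in>UNIV. \<Sum>k2\<in>UNIV. N i1 j1 k1 * N i2 j2 k2 * (N k1 l1 p1 * N k2 l2 p2)) =
      (\<Sum>k1\<in>UNIV. N i1 j1 k1 * N k1 l1 p1) * (\<Sum>k2\<in>UNIV. N i2 j2 k2 * N k2 l2 p2)"
    by (simp add: sum_product mult_ac)
  moreover have "(\<Sum>k1\<in>UNIV. \<Sum>k2\<in>UNIV. N j1 l1 k1 * N j2 l2 k2 * (N i1 k1 p1 * N i2 k2 p2)) =
      (\<Sum>k1\<in>UNIV. N j1 l1 k1 * N i1 k1 p1) * (\<Sum>k2\<in>UNIV. N j2 l2 k2 * N i2 k2 p2)"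
    by (simp add: sum_product mult_ac)
  ultimately show ?thesis
    by (simp add: sum_UNIV_pair N_assoc)
qed

lemma fusion_ring_tensor: "fusion_ring (tensor_N N) (e, e) (tensor_dual dual)"
  unfolding fusion_ring_def
proof (intro conjI allI)
  fix i j k :: "'b \<times> 'b"
  show "tensor_N N (e, e) j k = (if j = k then 1 else 0)"
    by (cases j, cases k) (simp add: N_unit_left)
  show "tensor_N N j (e, e) k = (if j = k then 1 else 0)"
    by (cases j, cases k) (simp add: N_unit_right)
  show "tensor_dual dual (tensor_dual dual i) = i"
    by (cases i) simp
  show "tensor_N N i j k = tensor_N N (tensor_dual dual j) (tensor_dual dual i) (tensor_dual dual k)"
    by (cases i, cases j, cases k) (simp add: N_dual[of "dual _"])
  show "tensor_N N i j (e, e) = (if i = tensor_dual dual j then 1 else 0)"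
    by (cases i, cases j) (auto simp: N_at_unit)
qed (rule tensor_N_assoc)

lemma tensor_mul_at_unit:
  "alg_mult (tensor_N N) F G (e, l) = (\<Sum>b\<in>UNIV. mul (\<lambda>q. F (dual b, q)) (\<lambda>q. G (b, q)) l)"
proof -
  have "alg_mult (tensor_N N) F G (e, l) =
      (\<Sum>a1\<in>UNIV. \<Sum>a2\<in>UNIV. \<Sum>b1\<in>UNIV.
        if a1 = dual b1 then \<Sum>b2\<in>UNIV. F (a1, a2) * G (b1, b2) * of_nat (N a2 b2 l) else 0)"
    unfolding alg_mult_def sum_UNIV_pair tensor_N_apply by (intro sum.cong refl) (auto simp: N_at_unit)
  also have "\<dots> = (\<Sum>a2\<in>UNIV. \<Sum>b1\<in>UNIV. \<Sum>b2\<in>UNIV. F (dual b1, a2) * G (b1, b2) * of_nat (N a2 b2 l))"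
    by (subst sum_move_outer_innermost) simp
  also have "\<dots> = (\<Sum>b\<in>UNIV. mul (\<lambda>q. F (dual b, q)) (\<lambda>q. G (b, q)) l)"
    by (subst sum.swap) (simp add: alg_mult_def)
  finally show ?thesis .
qed

definition tensor :: "('b \<Rightarrow> complex) \<Rightarrow> ('b \<Rightarrow> complex) \<Rightarrow> 'b \<times> 'b \<Rightarrow> complex" where
  "tensor a b = (\<lambda>(i, j). a i * b j)"

lemma tensor_mul_tensor:
  "alg_mult (tensor_N N) (tensor a b) (tensor c d) = tensor (mul a c) (mul b d)"
proof
  fix pq :: "'b \<times> 'b"
  obtain p q where pq: "pq = (p, q)" by (cases pq)
  have "alg_mult (tensor_N N) (tensor a b) (tensor c d) (p, q) =
      (\<Sum>i1\<in>UNIV. \<Sum>i2\<in>UNIV. \<Sum>j1\<in>UNIV. \<Sum>j2\<in>UNIV.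
        (a i1 * c j1 * of_nat (N i1 j1 p)) * (b i2 * d j2 * of_nat (N i2 j2 q)))"
    unfolding alg_mult_def sum_UNIV_pair tensor_def by (simp add: mult_ac)
  also have "\<dots> = tensor (mul a c) (mul b d) (p, q)"
    by (simp add: tensor_def alg_mult_def sum_product)
  finally show "alg_mult (tensor_N N) (tensor a b) (tensor c d) pq = tensor (mul a c) (mul b d) pq"
    by (simp only: pq)
qed

lemma adj_tensor: "alg_star (tensor_dual dual) (tensor a b) = tensor (adj a) (adj b)"
  by (simp add: alg_star_def tensor_def fun_eq_iff)

lemma tensor_one_mul_at_unit:
  "alg_mult (tensor_N N) (tensor u one) F (e, l) = (\<Sum>b\<in>UNIV. u (dual b) * F (b, l))"
proof -
  have "(\<lambda>q. tensor u one (dual b, q)) = (\<lambda>q. u (dual b) * one q)" for b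
    by (simp add: tensor_def)
  then show ?thesis
    by (simp add: tensor_mul_at_unit mul_scale_left)
qed

lemma mul_tensor_one_at_unit:
  "alg_mult (tensor_N N) F (tensor u one) (e, l) = (\<Sum>b\<in>UNIV. u (dual b) * F (b, l))"
proof -
  have "(\<lambda>q. tensor u one (b, q)) = (\<lambda>q. u b * one q)" for b
    by (simp add: tensor_def)
  then have "alg_mult (tensor_N N) F (tensor u one) (e, l) = (\<Sum>b\<in>UNIV. u b * F (dual b, l))"
    by (simp add: tensor_mul_at_unit mul_scale_right mult.commute)
  also have "\<dots> = (\<Sum>b\<in>UNIV. u (dual b) * F (b, l))"
    by (subst sum_reindex_dual[symmetric]) simp
  finally show ?thesis .
qed

lemma tensor_adj_mul_self_at_unit:
  "alg_mult (tensor_N N) (alg_star (tensor_dual dual) E) E (e, l) =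
    (\<Sum>i\<in>UNIV. mul (adj (\<lambda>q. E (i, q))) (\<lambda>q. E (i, q)) l)"
proof -
  have "(\<lambda>q. alg_star (tensor_dual dual) E (dual i, q)) = adj (\<lambda>q. E (i, q))" for i
    by (simp add: alg_star_def)
  then show ?thesis
    by (simp add: tensor_mul_at_unit)
qed

lemma adj_mul_self_conj_at_dual:
  "mul (adj (\<lambda>k. cnj (c k))) (\<lambda>k. cnj (c k)) (dual l) = mul (adj c) c l"
proof -
  have "mul (adj (\<lambda>k. cnj (c k))) (\<lambda>k. cnj (c k)) (dual l) =
      (\<Sum>i\<in>UNIV. \<Sum>j\<in>UNIV. c (dual i) * cnj (c j) * of_nat (N (dual j) (dual i) l))"
    by (simp add: alg_mult_def alg_star_def N_dual[of _ _ "dual l"])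
  also have "\<dots> = (\<Sum>j\<in>UNIV. \<Sum>i\<in>UNIV. cnj (c (dual j)) * c i * of_nat (N j i l))"
    by (subst sum.swap, subst (1 2) sum_reindex_dual[symmetric]) (simp add: mult_ac)
  also have "\<dots> = mul (adj c) c l"
    by (simp add: alg_mult_def alg_star_def)
  finally show ?thesis .
qed

lemma convolution_eq_sum_adj_mul_self:
  assumes "comult N e dual x = alg_mult (tensor_N N) (alg_star (tensor_dual dual) D) D"
    and "y = mul (adj c) c"
  shows "\<exists>E :: 'b \<times> 'b \<Rightarrow> complex.
    convolution N e dual x y = (\<Sum>i\<in>UNIV. mul (adj (\<lambda>q. E (i, q))) (\<lambda>q. E (i, q)))"
proof -
  interpret T: fusion_algebra "tensor_N N" "(e, e)" "tensor_dual dual"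
    by (rule fusion_algebra.intro[OF fusion_ring_tensor])
  define U where "U = tensor (\<lambda>k. cnj (c k)) one"
  define E where "E = T.mul D (T.adj U)"
  have "convolution N e dual x y l = T.mul (T.adj E) E (e, l)" for l
  proof -
    have "convolution N e dual x y l =
        T.mul (tensor (mul (adj (\<lambda>k. cnj (c k))) (\<lambda>k. cnj (c k))) one) (comult N e dual x) (e, l)"
      by (simp add: tensor_one_mul_at_unit comult_def convolution_def assms(2) adj_mul_self_conj_at_dual
          if_distrib cong: if_cong)
    also have "tensor (mul (adj (\<lambda>k. cnj (c k))) (\<lambda>k. cnj (c k))) one = T.mul (T.adj U) U"
      by (simp add: U_def adj_tensor tensor_mul_tensor)
    also have "T.mul (T.mul (T.adj U) U) (comult N e dual x) = T.mul (T.adj U) (T.mul U (T.mul (T.adj D) D))"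
      by (simp add: assms(1) T.mul_assoc)
    also have "\<dots> (e, l) = T.mul (T.mul U (T.mul (T.adj D) D)) (T.adj U) (e, l)"
      by (simp add: U_def adj_tensor tensor_one_mul_at_unit mul_tensor_one_at_unit)
    also have "T.mul (T.mul U (T.mul (T.adj D) D)) (T.adj U) = T.mul (T.adj E) E"
      by (simp add: E_def T.adj_mul T.mul_assoc)
    finally show ?thesis .
  qed
  then show ?thesis
    by (intro exI[of _ E]) (simp add: fun_eq_iff tensor_adj_mul_self_at_unit sum_fun_apply)
qed

end

theorem mainTheorem14:
  fixes N :: "'a::finite \<Rightarrow> 'a \<Rightarrow> 'a \<Rightarrow> nat" and e :: 'a and dual :: "'a \<Rightarrow> 'a"
  assumes "fusion_ring N e dual"
    and "\<forall>a. alg_pos N dual a \<longrightarrow> alg_pos (tensor_N N) (tensor_dual dual) (comult N e dual a)"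
    and "alg_pos N dual x" and "alg_pos N dual y"
  shows "alg_pos N dual (convolution N e dual x y)"
proof -
  interpret fusion_algebra N e dual
    by (rule fusion_algebra.intro) (rule assms(1))
  obtain c where "y = mul (adj c) c"
    using assms(4) by (auto simp: alg_pos_def)
  moreover obtain D where "comult N e dual x = alg_mult (tensor_N N) (alg_star (tensor_dual dual) D) D"
    using assms(2,3) by (auto simp: alg_pos_def)
  ultimately obtain E :: "'a \<times> 'a \<Rightarrow> complex"
    where "convolution N e dual x y = (\<Sum>i\<in>UNIV. mul (adj (\<lambda>q. E (i, q))) (\<lambda>q. E (i, q)))"
    using convolution_eq_sum_adj_mul_self by blast
  then show ?thesis
    using alg_pos_sum_adj_mul_self[of UNIV "\<lambda>i q. E (i, q)"] by simp
qed

end
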